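(* Let $$U_8=S_0\otimes S_0\otimes S_0+S_1\otimes S_3\otimes S_0+S_2\otimes S_0\otimes S_1+S_3\otimes S_2\otimes S_1+S_0\otimes S_1\otimes S_2+S_1\otimes S_2\otimes S_2+S_2\otimes S_1\otimes S_3+S_3\otimes S_3\otimes S_3.$$ Then $\mathrm{sr}(U_8)\in\{7,8\}$.
   Context: $S_0=\begin{bmatrix}1&0\\0&0\end{bmatrix}$, $S_1=\begin{bmatrix}0&1\\0&0\end{bmatrix}$, $S_2=\begin{bmatrix}0&0\\1&0\end{bmatrix}$, $S_3=\begin{bmatrix}0&0\\0&1\end{bmatrix}$. For a matrix $U$ on $\mathbb{C}^2\otimes\mathbb{C}^2\otimes\mathbb{C}^2$ (systems $A,B,C$), its Schmidt rank $\mathrm{sr}(U)$ is the least integer $r$ such that $U=\sum_{j=1}^r A_j\otimes B_j\otimes C_j$ with $A_j,B_j,C_j$ complex $2\times 2$ matrices (i.e. the tensor rank of $U$). *)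

theory Defs
  imports "HOL-Analysis.Analysis"
begin

type_synonym mat2 = "complex^2^2"

definition mat2_of :: "complex \<Rightarrow> complex \<Rightarrow> complex \<Rightarrow> complex \<Rightarrow> mat2" where
  "mat2_of a b c d = (\<chi> i j. if i = 1 then (if j = 1 then a else b) else (if j = 1 then c else d))"

definition S0 :: mat2 where "S0 = mat2_of 1 0 0 0"
definition S1 :: mat2 where "S1 = mat2_of 0 1 0 0"
definition S2 :: mat2 where "S2 = mat2_of 0 0 1 0"
definition S3 :: mat2 where "S3 = mat2_of 0 0 0 1"

text \<open>Operators on C^2 (x) C^2 (x) C^2, as 8x8 matrices whose rows/columns are
  indexed by triples of basis indices (A,B,C).\<close>
type_synonym op3 = "(2 \<times> 2 \<times> 2) \<Rightarrow> (2 \<times> 2 \<times> 2) \<Rightarrow> complex"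

definition tprod3 :: "mat2 \<Rightarrow> mat2 \<Rightarrow> mat2 \<Rightarrow> op3" where
  "tprod3 A B C = (\<lambda>(i1, i2, i3) (j1, j2, j3). A $ i1 $ j1 * B $ i2 $ j2 * C $ i3 $ j3)"

text \<open>Schmidt rank = tensor rank: least r with U a sum of r elementary tensors.\<close>
definition schmidt_rank :: "op3 \<Rightarrow> nat" where
  "schmidt_rank U = (LEAST r. \<exists>A B C :: nat \<Rightarrow> mat2.
      U = (\<lambda>x y. \<Sum>j<r. tprod3 (A j) (B j) (C j) x y))"

definition U8 :: op3 where
  "U8 = (\<lambda>x y. tprod3 S0 S0 S0 x y + tprod3 S1 S3 S0 x y + tprod3 S2 S0 S1 x y
             + tprod3 S3 S2 S1 x y + tprod3 S0 S1 S2 x y + tprod3 S1 S2 S2 x y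
             + tprod3 S2 S1 S3 x y + tprod3 S3 S3 S3 x y)"

end

theory Submission
  imports Defs
begin

(*
  Suppose U8 were a sum of at most six product terms A_j \<otimes> B_j \<otimes> C_j, and write p_j, q_j for
  the columns of A_j and s_j, t_j for the rows of B_j.  Comparing blocks of U8, the entries of the
  C_j give four linearly independent relations among the six matrix triples
  (p_j t_j^T, q_j s_j^T, q_j t_j^T - swap(p_j s_j^T)), where swap exchanges the entries of the first
  row; so all six triples are combinations of two of them, while the same relations express
  every matrix unit through the rank-one matrices p_j s_j^T.  Thus all quadruples (p_j, q_j, s_j, t_j)
  are admissible for one triple of matrix pencils (H, K, G).  A case analysis on the pencils H and K
  (regular pencils are singular only on two lines; singular pencils have a common column or row;
  otherwise the kernels are trivial) shows that p s^T stays in a 3-dimensional space for every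
  admissible quadruple, which contradicts the spanning property.
*)

lemma pivot_exists:
  fixes n :: "'c \<Rightarrow> 'j \<Rightarrow> 'a::field"
  assumes "finite I" "c0 \<in> I"
    and independent: "\<forall>g. (\<forall>j\<in>J. (\<Sum>c\<in>I. g c * n c j) = 0) \<longrightarrow> (\<forall>c\<in>I. g c = 0)"
  shows "\<exists>j0\<in>J. n c0 j0 \<noteq> 0"
proof (rule ccontr)
  assume no_pivot: "\<not> (\<exists>j0\<in>J. n c0 j0 \<noteq> 0)"
  have "(\<Sum>c\<in>I. (if c = c0 then 1 else 0) * n c j) = (\<Sum>c\<in>I. if c = c0 then n c0 j else 0)" for j
    by (intro sum.cong) auto
  with no_pivot assms(1,2) have "\<forall>j\<in>J. (\<Sum>c\<in>I. (if c = c0 then 1 else 0) * n c j) = 0"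
    by simp
  then show False
    using independent[rule_format, of "\<lambda>c. if c = c0 then 1 else 0" c0] assms(2) by simp
qed

lemma pivot_elimination_relation:
  fixes n :: "'c \<Rightarrow> 'j \<Rightarrow> 'a::field"
  assumes "finite J" "j0 \<in> J"
    and "(\<Sum>j\<in>J. n c0 j * nu j k) = 0" "(\<Sum>j\<in>J. n c j * nu j k) = 0" "n c0 j0 \<noteq> 0"
  shows "(\<Sum>j\<in>J - {j0}. (n c j - n c j0 / n c0 j0 * n c0 j) * nu j k) = 0"
proof -
  define \<rho> where "\<rho> = n c j0 / n c0 j0"
  have "(\<Sum>j\<in>J - {j0}. (n c j - \<rho> * n c0 j) * nu j k) = (\<Sum>j\<in>J. (n c j - \<rho> * n c0 j) * nu j k)"
    using assms by (simp add: sum.remove \<rho>_def)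
  also have "\<dots> = (\<Sum>j\<in>J. n c j * nu j k) - \<rho> * (\<Sum>j\<in>J. n c0 j * nu j k)"
    by (simp add: algebra_simps sum_subtractf sum_distrib_left)
  finally show ?thesis
    using assms(3,4) by (simp add: \<rho>_def)
qed

lemma pivot_elimination_independent:
  fixes n :: "'c \<Rightarrow> 'j \<Rightarrow> 'a::field"
  assumes "finite I" "c0 \<notin> I" "j0 \<in> J" "n c0 j0 \<noteq> 0"
    and independent: "\<forall>g. (\<forall>j\<in>J. (\<Sum>c\<in>insert c0 I. g c * n c j) = 0) \<longrightarrow> (\<forall>c\<in>insert c0 I. g c = 0)"
    and g: "\<forall>j\<in>J - {j0}. (\<Sum>c\<in>I. g c * (n c j - n c j0 / n c0 j0 * n c0 j)) = 0"
  shows "\<forall>c\<in>I. g c = 0"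
proof -
  define g' where "g' c = (if c = c0 then - (\<Sum>c\<in>I. g c * n c j0) / n c0 j0 else g c)" for c
  have reduced: "(\<Sum>c\<in>insert c0 I. g' c * n c j) = (\<Sum>c\<in>I. g c * (n c j - n c j0 / n c0 j0 * n c0 j))"
    for j
  proof -
    have "(\<Sum>c\<in>I. g c * (n c j - n c j0 / n c0 j0 * n c0 j))
        = (\<Sum>c\<in>I. g c * n c j - g c * n c j0 * (n c0 j / n c0 j0))"
      by (intro sum.cong) (simp_all add: algebra_simps)
    also have "\<dots> = (\<Sum>c\<in>I. g c * n c j) - (\<Sum>c\<in>I. g c * n c j0) * (n c0 j / n c0 j0)"
      by (simp add: sum_subtractf sum_distrib_right del: times_divide_eq_right)
    also have "(\<Sum>c\<in>I. g c * n c j) = (\<Sum>c\<in>I. g' c * n c j)"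
      using assms(2) by (intro sum.cong) (auto simp: g'_def)
    finally show ?thesis
      using assms(1,2) by (simp add: g'_def)
  qed
  have "\<forall>j\<in>J. (\<Sum>c\<in>insert c0 I. g' c * n c j) = 0"
  proof
    fix j
    assume "j \<in> J"
    then show "(\<Sum>c\<in>insert c0 I. g' c * n c j) = 0"
      using g assms(4) by (cases "j = j0") (simp_all add: reduced)
  qed
  then have "\<forall>c\<in>insert c0 I. g' c = 0"
    using independent by blast
  with assms(2) show ?thesis
    by (auto simp: g'_def split: if_splits)
qed

lemma pivot_in_span:
  fixes n :: "'j \<Rightarrow> 'a::field" and nu :: "'j \<Rightarrow> 'k \<Rightarrow> 'a"
  assumes "finite J" "j0 \<in> J" "n j0 \<noteq> 0"
    and relation: "\<And>k. (\<Sum>j\<in>J. n j * nu j k) = 0"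
    and span: "\<forall>j\<in>J - {j0}. \<exists>\<alpha>. \<forall>k. nu j k = (\<Sum>s\<in>S. \<alpha> s * nu s k)"
  shows "\<exists>\<alpha>. \<forall>k. nu j0 k = (\<Sum>s\<in>S. \<alpha> s * nu s k)"
proof -
  obtain A where A: "\<forall>j\<in>J - {j0}. \<forall>k. nu j k = (\<Sum>s\<in>S. A j s * nu s k)"
    using bchoice[OF span] by blast
  have "nu j0 k = (\<Sum>s\<in>S. (- (\<Sum>j\<in>J - {j0}. n j * A j s) / n j0) * nu s k)" for k
  proof -
    have "n j0 * nu j0 k = - (\<Sum>j\<in>J - {j0}. n j * nu j k)"
      using relation[of k] assms(1,2) by (simp add: sum.remove eq_neg_iff_add_eq_0)
    also have "(\<Sum>j\<in>J - {j0}. n j * nu j k) = (\<Sum>j\<in>J - {j0}. \<Sum>s\<in>S. n j * A j s * nu s k)"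
      using A by (simp add: sum_distrib_left mult.assoc)
    also have "\<dots> = (\<Sum>s\<in>S. (\<Sum>j\<in>J - {j0}. n j * A j s) * nu s k)"
      by (subst sum.swap) (simp add: sum_distrib_right)
    finally have "nu j0 k = - (\<Sum>s\<in>S. (\<Sum>j\<in>J - {j0}. n j * A j s) * nu s k) / n j0"
      using assms(3) by (simp add: field_simps)
    also have "\<dots> = (\<Sum>s\<in>S. - ((\<Sum>j\<in>J - {j0}. n j * A j s) * nu s k) / n j0)"
      by (simp add: sum_divide_distrib sum_negf)
    finally show ?thesis
      by simp
  qed
  then show ?thesis
    by (intro exI[of _ "\<lambda>s. - (\<Sum>j\<in>J - {j0}. n j * A j s) / n j0"]) simp
qed

lemma independent_relations_shrink_spanning_set:
  fixes n :: "'c \<Rightarrow> 'j \<Rightarrow> 'a::field" and nu :: "'j \<Rightarrow> 'k \<Rightarrow> 'a"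
  assumes "finite I" "finite J"
    and "\<forall>c\<in>I. \<forall>k. (\<Sum>j\<in>J. n c j * nu j k) = 0"
    and "\<forall>g. (\<forall>j\<in>J. (\<Sum>c\<in>I. g c * n c j) = 0) \<longrightarrow> (\<forall>c\<in>I. g c = 0)"
  shows "\<exists>S\<subseteq>J. card S + card I \<le> card J \<and> (\<forall>j\<in>J. \<exists>\<alpha>. \<forall>k. nu j k = (\<Sum>s\<in>S. \<alpha> s * nu s k))"
  using assms
proof (induction I arbitrary: J n rule: finite_induct)
  case empty
  have "nu j k = (\<Sum>s\<in>J. (if s = j then 1 else 0) * nu s k)" if "j \<in> J" for j k
  proof -
    have "(\<Sum>s\<in>J. (if s = j then 1 else 0) * nu s k) = (\<Sum>s\<in>J. if s = j then nu s k else 0)"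
      by (intro sum.cong) auto
    with that empty.prems(1) show ?thesis
      by simp
  qed
  then show ?case
    by (intro exI[of _ J]) auto
next
  case (insert c0 I)
  obtain j0 where j0: "j0 \<in> J" "n c0 j0 \<noteq> 0"
    using pivot_exists[OF _ _ insert.prems(3)] insert.hyps(1) by blast
  define n' where "n' c j = n c j - n c j0 / n c0 j0 * n c0 j" for c j
  have finite: "finite (J - {j0})"
    using insert.prems(1) by simp
  have relations: "\<forall>c\<in>I. \<forall>k. (\<Sum>j\<in>J - {j0}. n' c j * nu j k) = 0"
  proof (intro ballI allI)
    fix c k
    assume "c \<in> I"
    have sums: "(\<Sum>j\<in>J. n c0 j * nu j k) = 0" "(\<Sum>j\<in>J. n c j * nu j k) = 0"
      using insert.prems(2) \<open>c \<in> I\<close> by simp_all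
    show "(\<Sum>j\<in>J - {j0}. n' c j * nu j k) = 0"
      unfolding n'_def by (rule pivot_elimination_relation) (use insert.prems(1) j0 sums in auto)
  qed
  have independent: "\<forall>g. (\<forall>j\<in>J - {j0}. (\<Sum>c\<in>I. g c * n' c j) = 0) \<longrightarrow> (\<forall>c\<in>I. g c = 0)"
    unfolding n'_def by (intro allI impI) (erule pivot_elimination_independent[OF insert.hyps j0 insert.prems(3)])
  obtain S where S: "S \<subseteq> J - {j0}" "card S + card I \<le> card (J - {j0})"
    and span: "\<forall>j\<in>J - {j0}. \<exists>\<alpha>. \<forall>k. nu j k = (\<Sum>s\<in>S. \<alpha> s * nu s k)"
    using insert.IH[OF finite relations independent] by blast
  have pivot: "\<exists>\<alpha>. \<forall>k. nu j0 k = (\<Sum>s\<in>S. \<alpha> s * nu s k)"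
    by (rule pivot_in_span[where n = "n c0", OF insert.prems(1) j0]) (use insert.prems(2) span in auto)
  have "\<exists>\<alpha>. \<forall>k. nu j k = (\<Sum>s\<in>S. \<alpha> s * nu s k)" if "j \<in> J" for j
    using pivot span that by (cases "j = j0") auto
  moreover have "card J = Suc (card (J - {j0}))"
    using insert.prems(1) j0(1) by (metis card_Suc_Diff1)
  moreover have "card (insert c0 I) = Suc (card I)"
    using insert.hyps by simp
  ultimately show ?case
    using S by (intro exI[of _ S]) auto
qed

lemma sum_over_card_le_2:
  fixes f :: "'j \<Rightarrow> 'k \<Rightarrow> 'a::comm_semiring_1"
  assumes "finite S" "card S \<le> 2"
  shows "\<exists>x y. \<forall>\<alpha>. \<exists>a b. \<forall>k. (\<Sum>s\<in>S. \<alpha> s * f s k) = a * f x k + b * f y k"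
proof -
  have "card S = 0 \<or> card S = 1 \<or> card S = 2"
    using assms(2) by arith
  then consider "S = {}" | x where "S = {x}" | x y where "x \<noteq> y" "S = {x, y}"
    using assms(1) by (elim disjE) (auto simp: card_1_singleton_iff card_2_iff)
  then show ?thesis
  proof cases
    case 1
    then have "(\<Sum>s\<in>S. \<alpha> s * f s k) = 0 * f x k + 0 * f x k" for \<alpha> k x
      by simp
    then show ?thesis
      by blast
  next
    case (2 x)
    then have "(\<Sum>s\<in>S. \<alpha> s * f s k) = \<alpha> x * f x k + 0 * f x k" for \<alpha> k
      by simp
    then show ?thesis
      by blast
  next
    case (3 x y)
    then have "(\<Sum>s\<in>S. \<alpha> s * f s k) = \<alpha> x * f x k + \<alpha> y * f y k" for \<alpha> k
      by simp
    then show ?thesis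
      by blast
  qed
qed

definition outer :: "complex^2 \<Rightarrow> complex^2 \<Rightarrow> mat2" where
  "outer u v = (\<chi> i j. u$i * v$j)"

definition cscale :: "complex \<Rightarrow> mat2 \<Rightarrow> mat2" where
  "cscale c M = (\<chi> i j. c * M$i$j)"

definition pencil :: "complex \<Rightarrow> complex \<Rightarrow> mat2 \<Rightarrow> mat2 \<Rightarrow> mat2" where
  "pencil a b M N = (\<chi> i j. a * M$i$j + b * N$i$j)"

definition swap_first_row :: "mat2 \<Rightarrow> mat2" where
  "swap_first_row X = (\<chi> i j. if i = 1 then X$1$(if j = 1 then 2 else 1) else X$i$j)"

definition pairing :: "mat2 \<Rightarrow> mat2 \<Rightarrow> complex" where
  "pairing T X = (\<Sum>i\<in>UNIV. \<Sum>j\<in>UNIV. T$i$j * X$i$j)"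

definition on_line :: "complex \<Rightarrow> complex \<Rightarrow> complex \<Rightarrow> complex \<Rightarrow> bool" where
  "on_line z1 z2 a b \<longleftrightarrow> (\<exists>m. a = m * z1 \<and> b = m * z2)"

definition in_span3 :: "mat2 \<Rightarrow> mat2 \<Rightarrow> mat2 \<Rightarrow> mat2 \<Rightarrow> bool" where
  "in_span3 Y1 Y2 Y3 X \<longleftrightarrow> (\<exists>c1 c2 c3. X = cscale c1 Y1 + cscale c2 Y2 + cscale c3 Y3)"

lemma mat2_eq_iff:
  "(M::mat2) = N \<longleftrightarrow> M$1$1 = N$1$1 \<and> M$1$2 = N$1$2 \<and> M$2$1 = N$2$1 \<and> M$2$2 = N$2$2"
  by (auto simp: vec_eq_iff forall_2)

lemma vec2_eq_iff: "(u::complex^2) = v \<longleftrightarrow> u$1 = v$1 \<and> u$2 = v$2"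
  by (auto simp: vec_eq_iff forall_2)

lemma outer_nth [simp]: "outer u v $ i $ j = u$i * v$j"
  by (simp add: outer_def)

lemma cscale_nth [simp]: "cscale c M $ i $ j = c * M$i$j"
  by (simp add: cscale_def)

lemma pencil_nth [simp]: "pencil a b M N $ i $ j = a * M$i$j + b * N$i$j"
  by (simp add: pencil_def)

lemma swap_first_row_nth [simp]:
  "swap_first_row X $ 1 $ 1 = X$1$2" "swap_first_row X $ 1 $ 2 = X$1$1"
  "swap_first_row X $ 2 $ j = X$2$j"
  by (simp_all add: swap_first_row_def)

lemma swap_first_row_involutive [simp]: "swap_first_row (swap_first_row X) = X"
  by (simp add: mat2_eq_iff)

lemma swap_first_row_0 [simp]: "swap_first_row 0 = 0"
  by (simp add: mat2_eq_iff)

lemma cscale_0_left [simp]: "cscale 0 M = 0"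
  and cscale_0_right [simp]: "cscale c 0 = 0"
  by (simp_all add: mat2_eq_iff)

lemma cscale_eq_0_iff: "cscale c M = 0 \<longleftrightarrow> c = 0 \<or> M = 0"
  by (auto simp: mat2_eq_iff vec_eq_iff forall_2)

lemma pairing_expand:
  "pairing T X = T$1$1 * X$1$1 + T$1$2 * X$1$2 + T$2$1 * X$2$1 + T$2$2 * X$2$2"
  by (simp add: pairing_def sum_2)

lemma pairing_sum: "pairing T (\<Sum>j\<in>J. cscale (f j) (X j)) = (\<Sum>j\<in>J. f j * pairing T (X j))"
  by (simp add: pairing_def sum_distrib_left sum_distrib_right mult.left_commute)
     (subst sum.swap, subst (2) sum.swap, rule refl)

lemma outer_eq_0_iff: "outer u v = 0 \<longleftrightarrow> u = 0 \<or> v = 0"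
  by (auto simp: mat2_eq_iff vec2_eq_iff)

lemma det_outer [simp]: "det (outer u v) = 0"
  by (simp add: det_2)

lemma det_cscale: "det (cscale c M) = c^2 * det M"
  by (simp add: det_2 power2_eq_square algebra_simps)

lemma transpose_outer: "transpose (outer u v) = outer v u"
  by (simp add: transpose_def vec_eq_iff)

lemma cscale_outer: "cscale c (outer u v) = outer u (c *s v)"
  by (simp add: mat2_eq_iff algebra_simps)

lemma outer_scale_left: "outer (c *s u) v = cscale c (outer u v)"
  by (simp add: mat2_eq_iff algebra_simps)

lemma rank_one_if_det_eq_0:
  assumes "det M = 0"
  shows "\<exists>u v. M = outer u v"
proof (cases "M$1$1 = 0")
  case False
  with assms show ?thesis
    by (intro exI[of _ "vector [1, M$2$1 / M$1$1]"] exI[of _ "vector [M$1$1, M$1$2]"])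
       (auto simp: mat2_eq_iff det_2 field_simps)
next
  case True
  show ?thesis
  proof (cases "M$1$2 = 0")
    case False
    with True assms have "M$2$1 = 0" by (auto simp: det_2)
    with True False show ?thesis
      by (intro exI[of _ "vector [1, M$2$2 / M$1$2]"] exI[of _ "vector [0, M$1$2]"])
         (auto simp: mat2_eq_iff field_simps)
  next
    case True
    with \<open>M$1$1 = 0\<close> show ?thesis
      by (intro exI[of _ "vector [0, 1]"] exI[of _ "vector [M$2$1, M$2$2]"])
         (auto simp: mat2_eq_iff)
  qed
qed

lemma outer_eq_outer_imp_parallel_left:
  assumes "outer p t = outer u x" "outer u x \<noteq> 0"
  shows "\<exists>k. p = k *s u"
proof -
  have e: "p$i * t$j = u$i * x$j" for i j
    using assms(1) by (metis outer_nth)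
  obtain j where "x$j \<noteq> 0"
    using assms(2) by (auto simp: mat2_eq_iff)
  moreover from this have "t$j \<noteq> 0"
    using e[of 1 j] e[of 2 j] assms(2) by (auto simp: mat2_eq_iff)
  ultimately show ?thesis
    using e[of 1 j] e[of 2 j] by (intro exI[of _ "x$j / t$j"]) (auto simp: vec2_eq_iff field_simps)
qed

lemma outer_eq_outer_imp_parallel_right:
  assumes "outer q s = outer y v" "outer y v \<noteq> 0"
  shows "\<exists>k. s = k *s v"
proof (rule outer_eq_outer_imp_parallel_left)
  show "outer s q = outer v y"
    using arg_cong[OF assms(1), of transpose] by (simp add: transpose_outer)
  show "outer v y \<noteq> 0"
    using assms(2) by (simp add: outer_eq_0_iff)
qed

lemma parallel_if_cross_eq_0:
  fixes u v :: "complex^2"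
  assumes "u$1 * v$2 - u$2 * v$1 = 0"
  shows "\<exists>w \<alpha> \<beta>. u = \<alpha> *s w \<and> v = \<beta> *s w"
proof (cases "u$1 = 0")
  case True
  show ?thesis
  proof (cases "u$2 = 0")
    case False
    with True assms show ?thesis
      by (intro exI[of _ u] exI[of _ 1] exI[of _ "v$2 / u$2"]) (auto simp: vec2_eq_iff field_simps)
  next
    case True
    with \<open>u$1 = 0\<close> have "u = 0 *s v \<and> v = 1 *s v"
      by (simp add: vec2_eq_iff)
    then show ?thesis
      by blast
  qed
next
  case False
  with assms show ?thesis
    by (intro exI[of _ u] exI[of _ 1] exI[of _ "v$1 / u$1"]) (auto simp: vec2_eq_iff field_simps)
qed

lemma det_add_outer:
  "det (outer p1 t1 + outer p2 t2) = (p1$1 * p2$2 - p1$2 * p2$1) * (t1$1 * t2$2 - t1$2 * t2$1)"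
  by (simp add: det_2 algebra_simps)

lemma pencil_1_0 [simp]: "pencil 1 0 M N = M"
  and pencil_0_1 [simp]: "pencil 0 1 M N = N"
  and pencil_1_1 [simp]: "pencil 1 1 M N = M + N"
  and pencil_0_0 [simp]: "pencil 0 0 M N = 0"
  by (simp_all add: mat2_eq_iff)

lemma pencil_of_zeros [simp]: "pencil a b 0 0 = 0"
  by (simp add: mat2_eq_iff)

lemma pencil_scale: "pencil (m * a) (m * b) M N = cscale m (pencil a b M N)"
  by (simp add: mat2_eq_iff algebra_simps)

lemma pencil_outer_common_left:
  "pencil a b (outer p x1) (outer p x2) = outer p (a *s x1 + b *s x2)"
  by (simp add: mat2_eq_iff algebra_simps)

lemma pencil_outer_common_right:
  "pencil a b (outer x1 t) (outer x2 t) = outer (a *s x1 + b *s x2) t"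
  by (simp add: mat2_eq_iff algebra_simps)

lemma det_pencil:
  "det (pencil a b M N) = det M * a^2 + (det (M + N) - det M - det N) * a * b + det N * b^2"
  by (simp add: det_2 algebra_simps power2_eq_square)

lemma quadratic_form_factorization:
  fixes \<alpha> \<beta> \<gamma> :: complex
  assumes "\<alpha> \<noteq> 0"
  shows "\<exists>r1 r2. \<forall>a b. \<alpha> * a^2 + \<beta> * a * b + \<gamma> * b^2 = \<alpha> * (a - r1 * b) * (a - r2 * b)"
proof -
  define d where "d = csqrt (\<beta>^2 - 4 * \<alpha> * \<gamma>)"
  define r1 where "r1 = (- \<beta> + d) / (2 * \<alpha>)"
  define r2 where "r2 = (- \<beta> - d) / (2 * \<alpha>)"
  have sum: "\<alpha> * (r1 + r2) = - \<beta>"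
    using assms by (simp add: r1_def r2_def field_simps)
  have "\<alpha> * (r1 * r2) = (\<beta>^2 - d^2) / (4 * \<alpha>)"
    using assms by (simp add: r1_def r2_def field_simps power2_eq_square)
  also have "d^2 = \<beta>^2 - 4 * \<alpha> * \<gamma>"
    by (simp add: d_def)
  finally have prod: "\<alpha> * (r1 * r2) = \<gamma>"
    using assms by simp
  have "\<alpha> * (a - r1 * b) * (a - r2 * b) = \<alpha> * a^2 - \<alpha> * (r1 + r2) * a * b + \<alpha> * (r1 * r2) * b^2"
    for a b
    by (simp add: algebra_simps power2_eq_square)
  then have "\<alpha> * a^2 + \<beta> * a * b + \<gamma> * b^2 = \<alpha> * (a - r1 * b) * (a - r2 * b)" for a b
    by (simp add: sum prod)
  then show ?thesis
    by blast
qed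

lemma binary_quadratic_zeros_on_two_lines:
  fixes \<alpha> \<beta> \<gamma> :: complex
  assumes "\<alpha> \<noteq> 0 \<or> \<beta> \<noteq> 0 \<or> \<gamma> \<noteq> 0"
  shows "\<exists>z1 z2 w1 w2. \<forall>a b. \<alpha> * a^2 + \<beta> * a * b + \<gamma> * b^2 = 0 \<longrightarrow>
           on_line z1 z2 a b \<or> on_line w1 w2 a b"
proof (cases "\<alpha> = 0")
  case False
  then obtain r1 r2 where "\<And>a b. \<alpha> * a^2 + \<beta> * a * b + \<gamma> * b^2 = \<alpha> * (a - r1 * b) * (a - r2 * b)"
    using quadratic_form_factorization by blast
  with False show ?thesis
    by (intro exI[of _ r1] exI[of _ 1] exI[of _ r2] exI[of _ 1]) (auto simp: on_line_def)
next
  case \<alpha>: True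
  show ?thesis
  proof (rule exI[of _ 1], rule exI[of _ 0], rule exI[of _ "- \<gamma>"], rule exI[of _ \<beta>], intro allI impI)
    fix a b
    assume "\<alpha> * a^2 + \<beta> * a * b + \<gamma> * b^2 = 0"
    then have "b * (\<beta> * a + \<gamma> * b) = 0"
      using \<alpha> by (simp add: algebra_simps power2_eq_square)
    then consider "b = 0" | "\<beta> * a + \<gamma> * b = 0"
      by auto
    then show "on_line 1 0 a b \<or> on_line (- \<gamma>) \<beta> a b"
    proof cases
      case 2
      show ?thesis
      proof (cases "\<beta> = 0")
        case True
        with \<alpha> 2 assms show ?thesis
          by (auto simp: on_line_def)
      next
        case False
        with 2 have "a = (b / \<beta>) * (- \<gamma>) \<and> b = (b / \<beta>) * \<beta>"
          by (simp add: field_simps add_eq_0_iff)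
        then show ?thesis
          unfolding on_line_def by blast
      qed
    qed (auto simp: on_line_def)
  qed
qed

lemma pencil_singular_on_two_lines:
  assumes "det (pencil a0 b0 M N) \<noteq> 0"
  shows "\<exists>z1 z2 w1 w2. \<forall>a b. det (pencil a b M N) = 0 \<longrightarrow>
           on_line z1 z2 a b \<or> on_line w1 w2 a b"
proof -
  have "det M \<noteq> 0 \<or> det (M + N) - det M - det N \<noteq> 0 \<or> det N \<noteq> 0"
    using assms by (auto simp: det_pencil)
  from binary_quadratic_zeros_on_two_lines[OF this] show ?thesis
    by (simp add: det_pencil)
qed

lemma pencil_kernel_proportional:
  assumes "pencil a b M N = 0" "a \<noteq> 0 \<or> b \<noteq> 0"
  shows "(\<exists>c. M = cscale c N) \<or> (\<exists>c. N = cscale c M)"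
proof (cases "a = 0")
  case False
  with assms(1) have "M = cscale (- b / a) N"
    by (auto simp: mat2_eq_iff field_simps add_eq_0_iff)
  then show ?thesis
    by blast
next
  case True
  with assms have "N = cscale 0 M"
    by (auto simp: mat2_eq_iff)
  then show ?thesis
    by blast
qed

lemma pencil_kernel_on_line:
  assumes "M \<noteq> 0 \<or> N \<noteq> 0"
  shows "\<exists>z1 z2. \<forall>a b. pencil a b M N = 0 \<longrightarrow> on_line z1 z2 a b"
proof (cases "\<exists>c. M = cscale c N")
  case True
  then obtain c where M: "M = cscale c N" ..
  with assms have "N \<noteq> 0"
    by auto
  have "on_line 1 (- c) a b" if "pencil a b M N = 0" for a b
  proof -
    have "cscale (a * c + b) N = 0"
      using that by (simp add: M mat2_eq_iff algebra_simps)
    with \<open>N \<noteq> 0\<close> have "b = a * (- c)"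
      by (simp add: cscale_eq_0_iff add_eq_0_iff)
    then show ?thesis
      by (auto simp: on_line_def)
  qed
  then show ?thesis
    by blast
next
  case not_M: False
  show ?thesis
  proof (cases "\<exists>c. N = cscale c M")
    case True
    then obtain c where N: "N = cscale c M" ..
    with assms have "M \<noteq> 0"
      by auto
    have "on_line (- c) 1 a b" if "pencil a b M N = 0" for a b
    proof -
      have "cscale (a + b * c) M = 0"
        using that by (simp add: N mat2_eq_iff algebra_simps)
      with \<open>M \<noteq> 0\<close> have "a = b * (- c)"
        by (simp add: cscale_eq_0_iff add_eq_0_iff)
      then show ?thesis
        by (auto simp: on_line_def)
    qed
    then show ?thesis
      by blast
  next
    case False
    have "on_line 0 0 a b" if "pencil a b M N = 0" for a b
    proof -
      have "a = 0 \<and> b = 0"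
        using pencil_kernel_proportional[OF that] not_M False by blast
      then show ?thesis
        by (simp add: on_line_def)
    qed
    then show ?thesis
      by blast
  qed
qed

lemma singular_pencil_common_factor:
  assumes "\<forall>a b. det (pencil a b M N) = 0"
  shows "(\<exists>p x1 x2. M = outer p x1 \<and> N = outer p x2) \<or> (\<exists>t x1 x2. M = outer x1 t \<and> N = outer x2 t)"
proof -
  obtain p1 t1 where M: "M = outer p1 t1"
    using rank_one_if_det_eq_0[of M] assms[rule_format, of 1 0] by auto
  obtain p2 t2 where N: "N = outer p2 t2"
    using rank_one_if_det_eq_0[of N] assms[rule_format, of 0 1] by auto
  have "(p1$1 * p2$2 - p1$2 * p2$1) * (t1$1 * t2$2 - t1$2 * t2$1) = 0"
    using assms[rule_format, of 1 1] by (simp add: M N det_add_outer)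
  then consider "p1$1 * p2$2 - p1$2 * p2$1 = 0" | "t1$1 * t2$2 - t1$2 * t2$1 = 0"
    by auto
  then show ?thesis
  proof cases
    case 1
    then obtain w \<alpha> \<beta> where "p1 = \<alpha> *s w" "p2 = \<beta> *s w"
      using parallel_if_cross_eq_0 by blast
    then have "M = outer w (\<alpha> *s t1) \<and> N = outer w (\<beta> *s t2)"
      by (simp add: M N outer_scale_left cscale_outer)
    then show ?thesis
      by blast
  next
    case 2
    then obtain w \<alpha> \<beta> where "t1 = \<alpha> *s w" "t2 = \<beta> *s w"
      using parallel_if_cross_eq_0 by blast
    then have "M = outer (\<alpha> *s p1) w \<and> N = outer (\<beta> *s p2) w"
      by (simp add: M N outer_scale_left cscale_outer)
    then show ?thesis
      by blast
  qed
qed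

lemma pencil_common_right_kernel_trivial:
  assumes "M = outer x1 t" "N = outer x2 t"
    and "\<nexists>p y1 y2. M = outer p y1 \<and> N = outer p y2"
    and "pencil a b M N = 0"
  shows "a = 0 \<and> b = 0"
proof (rule ccontr)
  assume "\<not> (a = 0 \<and> b = 0)"
  with assms(4) consider c where "M = cscale c N" | c where "N = cscale c M"
    using pencil_kernel_proportional by blast
  then show False
  proof cases
    case 1
    then have "M = outer x2 (c *s t) \<and> N = outer x2 t"
      by (simp add: assms(2) cscale_outer)
    with assms(3) show False
      by blast
  next
    case 2
    then have "M = outer x1 t \<and> N = outer x1 (c *s t)"
      by (simp add: assms(1) cscale_outer)
    with assms(3) show False
      by blast
  qed
qed

lemma pencil_common_left_kernel_trivial:
  assumes "M = outer q y1" "N = outer q y2"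
    and "\<nexists>s x1 x2. M = outer x1 s \<and> N = outer x2 s"
    and "pencil a b M N = 0"
  shows "a = 0 \<and> b = 0"
proof (rule ccontr)
  assume "\<not> (a = 0 \<and> b = 0)"
  with assms(4) consider c where "M = cscale c N" | c where "N = cscale c M"
    using pencil_kernel_proportional by blast
  then show False
  proof cases
    case 1
    then have "M = outer (c *s q) y2 \<and> N = outer q y2"
      by (simp add: assms(2) cscale_outer outer_scale_left)
    with assms(3) show False
      by blast
  next
    case 2
    then have "M = outer q y1 \<and> N = outer (c *s q) y1"
      by (simp add: assms(1) cscale_outer outer_scale_left)
    with assms(3) show False
      by blast
  qed
qed

lemma in_span3_I1: "X = cscale c Y1 \<Longrightarrow> in_span3 Y1 Y2 Y3 X"
  unfolding in_span3_def by (rule exI[of _ c], rule exI[of _ 0], rule exI[of _ 0]) simp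

lemma in_span3_I2: "X = cscale c Y2 \<Longrightarrow> in_span3 Y1 Y2 Y3 X"
  unfolding in_span3_def by (rule exI[of _ 0], rule exI[of _ c], rule exI[of _ 0]) simp

lemma in_span3_I3: "X = cscale c Y3 \<Longrightarrow> in_span3 Y1 Y2 Y3 X"
  unfolding in_span3_def by (rule exI[of _ 0], rule exI[of _ 0], rule exI[of _ c]) simp

lemma pairing_annihilator_of_three:
  "\<exists>T. T \<noteq> 0 \<and> pairing T Y1 = 0 \<and> pairing T Y2 = 0 \<and> pairing T Y3 = 0"
proof -
  define entries :: "mat2 \<Rightarrow> complex^4" where
    "entries Y = (\<chi> k. if k = 1 then Y$1$1 else if k = 2 then Y$1$2 else if k = 3 then Y$2$1 else Y$2$2)"
    for Y
  define A :: "complex^4^4" where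
    "A = (\<chi> k. if k = 1 then entries Y1 else if k = 2 then entries Y2 else if k = 3 then entries Y3 else 0)"
  have "row 4 A = 0"
    by (simp add: A_def row_def vec_eq_iff)
  then have "det A = 0"
    by (rule det_zero_row)
  have "\<exists>x. A *v x = 0 \<and> x \<noteq> 0"
  proof (rule ccontr)
    assume "\<nexists>x. A *v x = 0 \<and> x \<noteq> 0"
    then obtain B where "B ** A = mat 1"
      using matrix_left_invertible_ker by blast
    then have "det B * det A = 1"
      by (metis det_I det_mul)
    with \<open>det A = 0\<close> show False
      by simp
  qed
  then obtain x where x: "A *v x = 0" "x \<noteq> 0"
    by blast
  define T :: mat2 where
    "T = (\<chi> i j. x $ (if i = 1 then (if j = 1 then 1 else 2) else (if j = 1 then 3 else 4)))"
  have "pairing T Y = (\<Sum>k\<in>UNIV. entries Y $ k * x $ k)" for Y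
    by (simp add: pairing_expand T_def sum_4 entries_def)
  then have "pairing T Y1 = (A *v x)$1" "pairing T Y2 = (A *v x)$2" "pairing T Y3 = (A *v x)$3"
    by (simp_all add: matrix_vector_mult_def A_def)
  moreover have "T \<noteq> 0"
  proof
    assume "T = 0"
    then have T0: "T$i$j = 0" for i j
      by simp
    have "x$1 = 0 \<and> x$2 = 0 \<and> x$3 = 0 \<and> x$4 = 0"
      using T0[of 1 1] T0[of 1 2] T0[of 2 1] T0[of 2 2] by (simp add: T_def)
    with x(2) show False
      by (simp add: vec_eq_iff forall_4)
  qed
  ultimately show ?thesis
    using x(1) by auto
qed

locale pencil_triple =
  fixes H1 H2 K1 K2 G1 G2 :: mat2
begin

definition admissible :: "complex^2 \<Rightarrow> complex^2 \<Rightarrow> complex^2 \<Rightarrow> complex^2 \<Rightarrow> complex \<Rightarrow> complex \<Rightarrow> bool"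
  where "admissible p q s t a b \<longleftrightarrow>
    outer p t = pencil a b H1 H2 \<and> outer q s = pencil a b K1 K2 \<and>
    outer q t = swap_first_row (outer p s) + pencil a b G1 G2"

definition outers_in_span3 :: bool
  where "outers_in_span3 \<longleftrightarrow>
    (\<exists>Y1 Y2 Y3. \<forall>p q s t a b. admissible p q s t a b \<longrightarrow> in_span3 Y1 Y2 Y3 (outer p s))"

lemma admissible_degenerate:
  assumes "admissible p q s t a b" "pencil a b H1 H2 = 0 \<or> pencil a b K1 K2 = 0"
  shows "\<exists>c. outer p s = cscale c (swap_first_row (pencil a b G1 G2))"
proof -
  from assms consider "outer p s = 0" | "outer q t = 0"
    by (auto simp: admissible_def outer_eq_0_iff)
  then show ?thesis
  proof cases
    case 1
    then show ?thesis
      by (metis cscale_0_left)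
  next
    case 2
    with assms(1) have "swap_first_row (outer p s) = - pencil a b G1 G2"
      by (simp add: admissible_def eq_neg_iff_add_eq_0)
    then have "outer p s = swap_first_row (- pencil a b G1 G2)"
      by (metis swap_first_row_involutive)
    then have "outer p s = cscale (- 1) (swap_first_row (pencil a b G1 G2))"
      by (simp add: mat2_eq_iff)
    then show ?thesis
      by blast
  qed
qed

lemma admissible_at_origin: "admissible p q s t 0 0 \<Longrightarrow> outer p s = 0"
  using admissible_degenerate[of p q s t 0 0] by auto

lemma admissible_degenerate_on_line:
  assumes "admissible p q s t a b" "on_line z1 z2 a b"
    and "pencil a b H1 H2 = 0 \<or> pencil a b K1 K2 = 0"
  shows "\<exists>c. outer p s = cscale c (swap_first_row (pencil z1 z2 G1 G2))"
proof -
  obtain m where m: "a = m * z1" "b = m * z2"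
    using assms(2) by (auto simp: on_line_def)
  obtain c where "outer p s = cscale c (swap_first_row (pencil a b G1 G2))"
    using admissible_degenerate[OF assms(1,3)] by blast
  then have "outer p s = cscale (c * m) (swap_first_row (pencil z1 z2 G1 G2))"
    by (simp add: m mat2_eq_iff algebra_simps)
  then show ?thesis
    by blast
qed

lemma admissible_on_regular_line:
  assumes "admissible p q s t a b" "on_line z1 z2 a b"
    and "det (pencil z1 z2 H1 H2) \<noteq> 0 \<or> det (pencil z1 z2 K1 K2) \<noteq> 0"
  shows "outer p s = 0"
proof -
  obtain m where m: "a = m * z1" "b = m * z2"
    using assms(2) by (auto simp: on_line_def)
  have "det (pencil a b H1 H2) = 0" "det (pencil a b K1 K2) = 0"
    using assms(1) by (metis admissible_def det_outer)+
  with assms(3) have "m = 0"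
    by (auto simp: m pencil_scale det_cscale)
  with assms(1) show ?thesis
    by (simp add: m admissible_at_origin)
qed

lemma admissible_on_rank_one_line:
  assumes "admissible p q s t a b" "on_line z1 z2 a b"
    and H: "pencil z1 z2 H1 H2 = outer u x" "outer u x \<noteq> 0"
    and K: "pencil z1 z2 K1 K2 = outer y v" "outer y v \<noteq> 0"
  shows "\<exists>c. outer p s = cscale c (outer u v)"
proof -
  obtain m where m: "a = m * z1" "b = m * z2"
    using assms(2) by (auto simp: on_line_def)
  show ?thesis
  proof (cases "m = 0")
    case True
    with assms(1) show ?thesis
      by (metis admissible_at_origin cscale_0_left m mult_zero_left)
  next
    case False
    have "outer p t = outer u (m *s x)" "outer q s = outer (m *s y) v"
      using assms(1) by (simp_all add: admissible_def m pencil_scale H K cscale_outer outer_scale_left)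
    moreover have "outer u (m *s x) \<noteq> 0" "outer (m *s y) v \<noteq> 0"
      using False H(2) K(2) by (simp_all add: outer_eq_0_iff)
    ultimately obtain k l where "p = k *s u" "s = l *s v"
      using outer_eq_outer_imp_parallel_left outer_eq_outer_imp_parallel_right by metis
    then have "outer p s = cscale (k * l) (outer u v)"
      by (simp add: mat2_eq_iff)
    then show ?thesis
      by blast
  qed
qed

lemma outer_proportional_on_line:
  "\<exists>Y. \<forall>p q s t a b. admissible p q s t a b \<and> on_line z1 z2 a b \<longrightarrow> (\<exists>c. outer p s = cscale c Y)"
proof (cases "pencil z1 z2 H1 H2 = 0 \<or> pencil z1 z2 K1 K2 = 0")
  case True
  then have "pencil a b H1 H2 = 0 \<or> pencil a b K1 K2 = 0" if "on_line z1 z2 a b" for a b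
    using that by (auto simp: on_line_def pencil_scale)
  then show ?thesis
    using admissible_degenerate_on_line by blast
next
  case nonzero: False
  show ?thesis
  proof (cases "det (pencil z1 z2 H1 H2) = 0 \<and> det (pencil z1 z2 K1 K2) = 0")
    case True
    then obtain u x y v where "pencil z1 z2 H1 H2 = outer u x" "pencil z1 z2 K1 K2 = outer y v"
      using rank_one_if_det_eq_0 by meson
    with nonzero show ?thesis
      using admissible_on_rank_one_line by metis
  next
    case False
    then show ?thesis
      using admissible_on_regular_line by (metis cscale_0_left)
  qed
qed

lemma outers_in_span3_if_on_two_lines:
  assumes "\<And>p q s t a b. admissible p q s t a b \<Longrightarrow> on_line z1 z2 a b \<or> on_line w1 w2 a b"
  shows outers_in_span3
proof -
  obtain Y where Y: "\<And>p q s t a b. admissible p q s t a b \<Longrightarrow> on_line z1 z2 a b \<Longrightarrow> \<exists>c. outer p s = cscale c Y"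
    using outer_proportional_on_line[of z1 z2] by blast
  obtain Y' where Y': "\<And>p q s t a b. admissible p q s t a b \<Longrightarrow> on_line w1 w2 a b \<Longrightarrow> \<exists>c. outer p s = cscale c Y'"
    using outer_proportional_on_line[of w1 w2] by blast
  have "in_span3 Y Y' 0 (outer p s)" if "admissible p q s t a b" for p q s t a b
    using assms[OF that] Y[OF that] Y'[OF that] in_span3_I1 in_span3_I2 by metis
  then show ?thesis
    unfolding outers_in_span3_def by blast
qed

lemma outers_in_span3_if_degenerate:
  assumes "(H1 = 0 \<and> H2 = 0) \<or> (K1 = 0 \<and> K2 = 0)"
  shows outers_in_span3
proof -
  have "in_span3 (swap_first_row G1) (swap_first_row G2) 0 (outer p s)"
    if adm: "admissible p q s t a b" for p q s t a b
  proof -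
    obtain c where "outer p s = cscale c (swap_first_row (pencil a b G1 G2))"
      using admissible_degenerate[OF adm] assms by auto
    then have "outer p s = cscale (c * a) (swap_first_row G1) + cscale (c * b) (swap_first_row G2) + cscale 0 0"
      by (simp add: mat2_eq_iff algebra_simps)
    then show ?thesis
      unfolding in_span3_def by blast
  qed
  then show ?thesis
    unfolding outers_in_span3_def by blast
qed

lemma outers_in_span3_if_common_column:
  assumes H: "H1 = outer p0 x1" "H2 = outer p0 x2" and "H1 \<noteq> 0 \<or> H2 \<noteq> 0"
  shows outers_in_span3
proof -
  obtain z1 z2 where ker: "\<And>a b. pencil a b H1 H2 = 0 \<Longrightarrow> on_line z1 z2 a b"
    using pencil_kernel_on_line[OF assms(3)] by blast
  have "in_span3 (outer p0 (axis 1 1)) (outer p0 (axis 2 1)) (swap_first_row (pencil z1 z2 G1 G2)) (outer p s)"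
    if adm: "admissible p q s t a b" for p q s t a b
  proof (cases "pencil a b H1 H2 = 0")
    case True
    then show ?thesis
      using admissible_degenerate_on_line[OF adm ker] in_span3_I3 by blast
  next
    case False
    have "outer p t = outer p0 (a *s x1 + b *s x2)" "outer p0 (a *s x1 + b *s x2) \<noteq> 0"
      using adm False unfolding admissible_def by (simp_all add: H pencil_outer_common_left)
    then obtain k where "p = k *s p0"
      using outer_eq_outer_imp_parallel_left by blast
    then have "outer p s = cscale (k * s$1) (outer p0 (axis 1 1)) + cscale (k * s$2) (outer p0 (axis 2 1))
        + cscale 0 (swap_first_row (pencil z1 z2 G1 G2))"
      by (simp add: mat2_eq_iff axis_def)
    then show ?thesis
      unfolding in_span3_def by blast
  qed
  then show ?thesis
    unfolding outers_in_span3_def by blast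
qed

lemma outers_in_span3_if_common_row:
  assumes K: "K1 = outer y1 s0" "K2 = outer y2 s0" and "K1 \<noteq> 0 \<or> K2 \<noteq> 0"
  shows outers_in_span3
proof -
  obtain z1 z2 where ker: "\<And>a b. pencil a b K1 K2 = 0 \<Longrightarrow> on_line z1 z2 a b"
    using pencil_kernel_on_line[OF assms(3)] by blast
  have "in_span3 (outer (axis 1 1) s0) (outer (axis 2 1) s0) (swap_first_row (pencil z1 z2 G1 G2)) (outer p s)"
    if adm: "admissible p q s t a b" for p q s t a b
  proof (cases "pencil a b K1 K2 = 0")
    case True
    then show ?thesis
      using admissible_degenerate_on_line[OF adm ker] in_span3_I3 by blast
  next
    case False
    have "outer q s = outer (a *s y1 + b *s y2) s0" "outer (a *s y1 + b *s y2) s0 \<noteq> 0"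
      using adm False unfolding admissible_def by (simp_all add: K pencil_outer_common_right)
    then obtain l where "s = l *s s0"
      using outer_eq_outer_imp_parallel_right by blast
    then have "outer p s = cscale (l * p$1) (outer (axis 1 1) s0) + cscale (l * p$2) (outer (axis 2 1) s0)
        + cscale 0 (swap_first_row (pencil z1 z2 G1 G2))"
      by (simp add: mat2_eq_iff axis_def)
    then show ?thesis
      unfolding in_span3_def by blast
  qed
  then show ?thesis
    unfolding outers_in_span3_def by blast
qed

lemma outers_in_span3_if_row_and_column:
  assumes H: "H1 = outer x1 t0" "H2 = outer x2 t0"
    and K: "K1 = outer q0 y1" "K2 = outer q0 y2"
    and H_ker: "\<And>a b. pencil a b H1 H2 = 0 \<Longrightarrow> a = 0 \<and> b = 0"
    and K_ker: "\<And>a b. pencil a b K1 K2 = 0 \<Longrightarrow> a = 0 \<and> b = 0"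
  shows outers_in_span3
proof -
  have "in_span3 (outer x1 y1) (outer x1 y2 + outer x2 y1) (outer x2 y2) (outer p s)"
    if adm: "admissible p q s t a b" for p q s t a b
  proof (cases "a = 0 \<and> b = 0")
    case True
    with adm show ?thesis
      using admissible_at_origin in_span3_I1[of _ 0] by simp
  next
    case False
    have "outer p t = outer (a *s x1 + b *s x2) t0" "outer (a *s x1 + b *s x2) t0 \<noteq> 0"
      using adm False H_ker unfolding admissible_def by (auto simp: H pencil_outer_common_right)
    then obtain k where k: "p = k *s (a *s x1 + b *s x2)"
      using outer_eq_outer_imp_parallel_left by blast
    have "outer q s = outer q0 (a *s y1 + b *s y2)" "outer q0 (a *s y1 + b *s y2) \<noteq> 0"
      using adm False K_ker unfolding admissible_def by (auto simp: K pencil_outer_common_left)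
    then obtain l where l: "s = l *s (a *s y1 + b *s y2)"
      using outer_eq_outer_imp_parallel_right by blast
    have "outer p s = cscale (k * l * a * a) (outer x1 y1) + cscale (k * l * a * b) (outer x1 y2 + outer x2 y1)
        + cscale (k * l * b * b) (outer x2 y2)"
      using k l by (simp add: mat2_eq_iff algebra_simps)
    then show ?thesis
      unfolding in_span3_def by blast
  qed
  then show ?thesis
    unfolding outers_in_span3_def by blast
qed

lemma outers_in_span3_if_singular_pencils:
  assumes H_singular: "\<forall>a b. det (pencil a b H1 H2) = 0"
    and K_singular: "\<forall>a b. det (pencil a b K1 K2) = 0"
  shows outers_in_span3
proof (cases "(H1 = 0 \<and> H2 = 0) \<or> (K1 = 0 \<and> K2 = 0)")
  case True
  then show ?thesis
    by (rule outers_in_span3_if_degenerate)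
next
  case nonzero: False
  show ?thesis
  proof (cases "\<exists>p x1 x2. H1 = outer p x1 \<and> H2 = outer p x2")
    case True
    with nonzero show ?thesis
      using outers_in_span3_if_common_column by blast
  next
    case H_no_column: False
    show ?thesis
    proof (cases "\<exists>s x1 x2. K1 = outer x1 s \<and> K2 = outer x2 s")
      case True
      with nonzero show ?thesis
        using outers_in_span3_if_common_row by blast
    next
      case K_no_row: False
      obtain x1 x2 t0 where H: "H1 = outer x1 t0" "H2 = outer x2 t0"
        using singular_pencil_common_factor[OF H_singular] H_no_column by blast
      obtain q0 y1 y2 where K: "K1 = outer q0 y1" "K2 = outer q0 y2"
        using singular_pencil_common_factor[OF K_singular] K_no_row by blast
      show ?thesis
        by (rule outers_in_span3_if_row_and_column[OF H K
              pencil_common_right_kernel_trivial[OF H H_no_column]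
              pencil_common_left_kernel_trivial[OF K K_no_row]])
    qed
  qed
qed

theorem outers_in_span3_holds: outers_in_span3
proof -
  have det_H: "det (pencil a b H1 H2) = 0" and det_K: "det (pencil a b K1 K2) = 0"
    if "admissible p q s t a b" for p q s t a b
    using that by (metis admissible_def det_outer)+
  show ?thesis
  proof (cases "\<exists>a b. det (pencil a b H1 H2) \<noteq> 0")
    case True
    then obtain z1 z2 w1 w2 where
      lines: "\<forall>a b. det (pencil a b H1 H2) = 0 \<longrightarrow> on_line z1 z2 a b \<or> on_line w1 w2 a b"
      using pencil_singular_on_two_lines by blast
    show ?thesis
      by (rule outers_in_span3_if_on_two_lines) (use lines det_H in blast)
  next
    case H_singular: False
    show ?thesis
    proof (cases "\<exists>a b. det (pencil a b K1 K2) \<noteq> 0")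
      case True
      then obtain z1 z2 w1 w2 where
        lines: "\<forall>a b. det (pencil a b K1 K2) = 0 \<longrightarrow> on_line z1 z2 a b \<or> on_line w1 w2 a b"
        using pencil_singular_on_two_lines by blast
      show ?thesis
        by (rule outers_in_span3_if_on_two_lines) (use lines det_K in blast)
    next
      case False
      with H_singular show ?thesis
        using outers_in_span3_if_singular_pencils by blast
    qed
  qed
qed

lemma admissible_outers_annihilated:
  "\<exists>T. T \<noteq> 0 \<and> (\<forall>p q s t a b. admissible p q s t a b \<longrightarrow> pairing T (outer p s) = 0)"
proof -
  obtain Y1 Y2 Y3 where Y: "\<And>p q s t a b. admissible p q s t a b \<Longrightarrow> in_span3 Y1 Y2 Y3 (outer p s)"
    using outers_in_span3_holds unfolding outers_in_span3_def by blast
  obtain T where T: "T \<noteq> 0" "pairing T Y1 = 0" "pairing T Y2 = 0" "pairing T Y3 = 0"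
    using pairing_annihilator_of_three by blast
  have "pairing T X = 0" if span: "in_span3 Y1 Y2 Y3 X" for X
  proof -
    obtain c1 c2 c3 where "X = cscale c1 Y1 + cscale c2 Y2 + cscale c3 Y3"
      using span unfolding in_span3_def by blast
    then have "pairing T X = c1 * pairing T Y1 + c2 * pairing T Y2 + c3 * pairing T Y3"
      by (simp add: pairing_expand algebra_simps)
    with T show ?thesis
      by simp
  qed
  with T(1) Y show ?thesis
    by blast
qed

end

lemma U8_entry:
  "U8 (i1, i2, i3) (j1, j2, j3) =
    (if j1 = 1 \<and> i2 = 1 then outer (axis j3 1) (axis i3 1) $ i1 $ j2
     else if j1 = 2 \<and> i2 = 2 then swap_first_row (outer (axis j3 1) (axis i3 1)) $ i1 $ j2
     else 0)"
  using exhaust_2[of i1] exhaust_2[of i2] exhaust_2[of i3] exhaust_2[of j1] exhaust_2[of j2] exhaust_2[of j3]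
  by (elim disjE)
     (simp_all add: U8_def tprod3_def S0_def S1_def S2_def S3_def mat2_of_def axis_def swap_first_row_def)

lemma U8_decomposition_slice:
  assumes "U8 = (\<lambda>x y. \<Sum>j\<in>J. tprod3 (A j) (B j) (C j) x y)"
  shows "(\<Sum>j\<in>J. cscale (C j $ c1 $ c2) (outer (column a (A j)) (row b (B j))))
    = (\<chi> i k. U8 (i, b, c1) (a, k, c2))"
  by (simp add: assms vec_eq_iff tprod3_def column_def row_def algebra_simps)

definition block_triple :: "mat2 \<Rightarrow> mat2 \<Rightarrow> nat \<Rightarrow> mat2" where
  "block_triple A B m =
    (if m = 0 then outer (column 1 A) (row 2 B)
     else if m = 1 then outer (column 2 A) (row 1 B)
     else outer (column 2 A) (row 2 B) - swap_first_row (outer (column 1 A) (row 1 B)))"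

lemma swap_first_row_sum:
  "swap_first_row (\<Sum>j\<in>J. cscale (f j) (Y j)) = (\<Sum>j\<in>J. cscale (f j) (swap_first_row (Y j)))"
  by (simp add: mat2_eq_iff)

lemma U8_decomposition_unit:
  assumes "U8 = (\<lambda>x y. \<Sum>j\<in>J. tprod3 (A j) (B j) (C j) x y)"
  shows "(\<Sum>j\<in>J. cscale (C j $ c1 $ c2) (outer (column 1 (A j)) (row 1 (B j))))
    = outer (axis c2 1) (axis c1 1)"
  by (simp add: U8_decomposition_slice[OF assms] U8_entry vec_eq_iff)

lemma U8_decomposition_block_triple:
  assumes "U8 = (\<lambda>x y. \<Sum>j\<in>J. tprod3 (A j) (B j) (C j) x y)"
  shows "(\<Sum>j\<in>J. cscale (C j $ c1 $ c2) (block_triple (A j) (B j) m)) = 0"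
proof -
  have "(\<Sum>j\<in>J. cscale (C j $ c1 $ c2) (outer (column 1 (A j)) (row 2 (B j)))) = 0"
    "(\<Sum>j\<in>J. cscale (C j $ c1 $ c2) (outer (column 2 (A j)) (row 1 (B j)))) = 0"
    "(\<Sum>j\<in>J. cscale (C j $ c1 $ c2) (outer (column 2 (A j)) (row 2 (B j))))
      = swap_first_row (outer (axis c2 1) (axis c1 1))"
    by (simp_all add: U8_decomposition_slice[OF assms] U8_entry vec_eq_iff)
  moreover have "cscale c (X - Y) = cscale c X - cscale c Y" for c X Y
    by (simp add: mat2_eq_iff algebra_simps)
  ultimately show ?thesis
    by (cases "m = 0 \<or> m = 1")
       (auto simp: block_triple_def sum_subtractf U8_decomposition_unit[OF assms]
         swap_first_row_sum[symmetric])
qed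

lemma U8_decomposition_coefficients_independent:
  assumes "U8 = (\<lambda>x y. \<Sum>j\<in>J. tprod3 (A j) (B j) (C j) x y)"
    and "\<forall>j\<in>J. (\<Sum>c\<in>UNIV. g c * C j $ fst c $ snd c) = 0"
  shows "g c0 = 0"
proof -
  define W where "W j = outer (column 1 (A j)) (row 1 (B j)) $ snd c0 $ fst c0" for j
  have delta: "(\<Sum>j\<in>J. C j $ fst c $ snd c * W j) = (if c = c0 then 1 else 0)" for c
  proof -
    have "(\<Sum>j\<in>J. C j $ fst c $ snd c * W j)
        = (\<Sum>j\<in>J. cscale (C j $ fst c $ snd c) (outer (column 1 (A j)) (row 1 (B j)))) $ snd c0 $ fst c0"
      by (simp add: W_def)
    also have "\<dots> = outer (axis (snd c) 1) (axis (fst c) 1) $ snd c0 $ fst c0"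
      by (simp only: U8_decomposition_unit[OF assms(1)])
    also have "\<dots> = (if c = c0 then 1 else 0)"
      by (cases c; cases c0) (auto simp: axis_def)
    finally show ?thesis .
  qed
  have "g c0 = (\<Sum>c\<in>UNIV. g c * (if c = c0 then 1 else 0))"
    by (simp add: if_distrib cong: if_cong)
  also have "\<dots> = (\<Sum>c\<in>UNIV. g c * (\<Sum>j\<in>J. C j $ fst c $ snd c * W j))"
    by (simp add: delta)
  also have "\<dots> = (\<Sum>j\<in>J. (\<Sum>c\<in>UNIV. g c * C j $ fst c $ snd c) * W j)"
    by (simp add: sum_distrib_left sum_distrib_right mult.assoc) (rule sum.swap)
  also have "\<dots> = 0"
    using assms(2) by simp
  finally show ?thesis .
qed

lemma U8_short_decomposition_two_generators:
  assumes "finite J" "card J \<le> 6"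
    and decomp: "U8 = (\<lambda>x y. \<Sum>j\<in>J. tprod3 (A j) (B j) (C j) x y)"
  shows "\<exists>x y. \<forall>j\<in>J. \<exists>\<alpha> \<beta>. \<forall>m.
    block_triple (A j) (B j) m = pencil \<alpha> \<beta> (block_triple (A x) (B x) m) (block_triple (A y) (B y) m)"
proof -
  define nu where "nu j = (\<lambda>(m, i, k). block_triple (A j) (B j) m $ i $ k)" for j
  have relations: "\<forall>c\<in>UNIV. \<forall>mik. (\<Sum>j\<in>J. C j $ fst c $ snd c * nu j mik) = 0"
  proof (intro ballI allI)
    fix c :: "2 \<times> 2" and mik :: "nat \<times> 2 \<times> 2"
    obtain m i k where mik: "mik = (m, i, k)"
      by (cases mik) auto
    have "(\<Sum>j\<in>J. cscale (C j $ fst c $ snd c) (block_triple (A j) (B j) m)) $ i $ k = 0"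
      by (simp only: U8_decomposition_block_triple[OF decomp]) simp
    then show "(\<Sum>j\<in>J. C j $ fst c $ snd c * nu j mik) = 0"
      by (simp add: mik nu_def)
  qed
  have independent: "\<forall>g. (\<forall>j\<in>J. (\<Sum>c\<in>UNIV. g c * C j $ fst c $ snd c) = 0) \<longrightarrow> (\<forall>c\<in>UNIV. g c = 0)"
    using U8_decomposition_coefficients_independent[OF decomp] by blast
  obtain S where S: "S \<subseteq> J" "card S + card (UNIV :: (2 \<times> 2) set) \<le> card J"
    and span: "\<forall>j\<in>J. \<exists>\<alpha>. \<forall>mik. nu j mik = (\<Sum>s\<in>S. \<alpha> s * nu s mik)"
    using independent_relations_shrink_spanning_set[OF finite assms(1) relations independent] by blast
  have "card (UNIV :: (2 \<times> 2) set) = 4"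
    by (simp add: card_UNIV_length_enum)
  with S assms(1,2) have "finite S" "card S \<le> 2"
    by (auto intro: finite_subset)
  then obtain x y where xy: "\<forall>\<alpha>. \<exists>a b. \<forall>mik. (\<Sum>s\<in>S. \<alpha> s * nu s mik) = a * nu x mik + b * nu y mik"
    using sum_over_card_le_2 by blast
  have "\<exists>\<alpha> \<beta>. \<forall>m. block_triple (A j) (B j) m = pencil \<alpha> \<beta> (block_triple (A x) (B x) m) (block_triple (A y) (B y) m)"
    if j: "j \<in> J" for j
  proof -
    obtain \<gamma> where "\<forall>mik. nu j mik = (\<Sum>s\<in>S. \<gamma> s * nu s mik)"
      using span j by blast
    with xy obtain a b where "\<forall>mik. nu j mik = a * nu x mik + b * nu y mik"
      by metis
    then have "block_triple (A j) (B j) m = pencil a b (block_triple (A x) (B x) m) (block_triple (A y) (B y) m)"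
      for m
      by (auto simp: vec_eq_iff nu_def)
    then show ?thesis
      by blast
  qed
  then show ?thesis
    by blast
qed

lemma U8_no_decomposition_of_length_le_6:
  assumes "finite J" "card J \<le> 6"
  shows "U8 \<noteq> (\<lambda>x y. \<Sum>j\<in>J. tprod3 (A j) (B j) (C j) x y)"
proof
  assume decomp: "U8 = (\<lambda>x y. \<Sum>j\<in>J. tprod3 (A j) (B j) (C j) x y)"
  obtain x y where gen: "\<forall>j\<in>J. \<exists>\<alpha> \<beta>. \<forall>m.
      block_triple (A j) (B j) m = pencil \<alpha> \<beta> (block_triple (A x) (B x) m) (block_triple (A y) (B y) m)"
    using U8_short_decomposition_two_generators[OF assms decomp] by blast
  interpret pencils: pencil_triple "block_triple (A x) (B x) 0" "block_triple (A y) (B y) 0"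
    "block_triple (A x) (B x) 1" "block_triple (A y) (B y) 1"
    "block_triple (A x) (B x) 2" "block_triple (A y) (B y) 2" .
  obtain T where T: "T \<noteq> 0"
    and annihilated: "\<forall>p q s t a b. pencils.admissible p q s t a b \<longrightarrow> pairing T (outer p s) = 0"
    using pencils.admissible_outers_annihilated by blast
  have zero: "pairing T (outer (column 1 (A j)) (row 1 (B j))) = 0" if j: "j \<in> J" for j
  proof -
    obtain \<alpha> \<beta> where e: "\<And>m. block_triple (A j) (B j) m
        = pencil \<alpha> \<beta> (block_triple (A x) (B x) m) (block_triple (A y) (B y) m)"
      using gen j by blast
    have "pencils.admissible (column 1 (A j)) (column 2 (A j)) (row 1 (B j)) (row 2 (B j)) \<alpha> \<beta>"
      using e[of 0] e[of 1] e[of 2]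
      unfolding pencils.admissible_def by (simp add: block_triple_def diff_eq_eq add.commute)
    with annihilated show ?thesis
      by blast
  qed
  have "T $ a $ b = 0" for a b
  proof -
    have "T $ a $ b = pairing T (outer (axis a 1) (axis b 1))"
      using exhaust_2[of a] exhaust_2[of b] by (auto simp: pairing_expand axis_def)
    also have "\<dots> = (\<Sum>j\<in>J. C j $ b $ a * pairing T (outer (column 1 (A j)) (row 1 (B j))))"
      by (simp add: U8_decomposition_unit[OF decomp, symmetric] pairing_sum)
    also have "\<dots> = 0"
      by (intro sum.neutral) (simp add: zero)
    finally show ?thesis .
  qed
  with T show False
    by (simp add: vec_eq_iff)
qed

lemma U8_decomposition_of_length_8:
  "U8 = (\<lambda>x y. \<Sum>j<8. tprod3 ([S0, S1, S2, S3, S0, S1, S2, S3] ! j)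
    ([S0, S3, S0, S2, S1, S2, S1, S3] ! j) ([S0, S0, S1, S1, S2, S2, S3, S3] ! j) x y)"
  by (simp add: U8_def numeral_eq_Suc add.assoc)

theorem theorem5:
  shows "schmidt_rank U8 \<in> {7, 8}"
proof -
  define decomposable where "decomposable r \<longleftrightarrow>
    (\<exists>A B C :: nat \<Rightarrow> mat2. U8 = (\<lambda>x y. \<Sum>j<r. tprod3 (A j) (B j) (C j) x y))" for r
  have rank: "schmidt_rank U8 = (LEAST r. decomposable r)"
    by (simp add: schmidt_rank_def decomposable_def)
  have "decomposable 8"
    unfolding decomposable_def using U8_decomposition_of_length_8 by blast
  then have "schmidt_rank U8 \<le> 8" "decomposable (schmidt_rank U8)"
    unfolding rank by (auto intro: Least_le LeastI)
  moreover have "\<not> decomposable r" if "r \<le> 6" for r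
    using U8_no_decomposition_of_length_le_6[of "{..<r}"] that by (auto simp: decomposable_def)
  ultimately have "6 < schmidt_rank U8 \<and> schmidt_rank U8 \<le> 8"
    by (meson not_le)
  then show ?thesis
    by auto
qed

end
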